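(* Let $n$ be a positive integer and $0<\phi<\infty$. For integers $r,k\ge 0$ with $k+r\le n$ define $$L(r,k) = \log\binom{n}{k+r} + (n-k-r)\log\phi + \log S(k+r,k),$$ with $\log 0 = -\infty$. Then $L(0,0)=n\log\phi$; $L(r,0)=-\infty$ for $1\le r\le n$; $L(0,k)=\log\binom{n}{k}+(n-k)\log\phi$ for $0\le k\le n$; and for all integers $r\ge1$, $k\ge1$ with $k+r\le n$, $$L(r,k) = \log(n-k-r+1) - \log(k+r) - \log\phi + \mathrm{logsumexp}\big(\log k + L(r-1,k),\ L(r,k-1)\big).$$ Furthermore, for $0\le k\le n$ and $0\le r\le n-k$, $$\log \mathrm{Spillage}(r\mid n,k,\phi) = L(r,k) - \mathrm{logsumexp}\big(L(0,k),\dots,L(n-k,k)\big).$$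
   Context: $S(j,k)$ denotes the (central) Stirling numbers of the second kind (with $S(0,0)=1$, $S(j,0)=0$ for $j\ge1$). $\mathrm{logsumexp}(a_1,\dots,a_p) = \log\sum_{i=1}^p e^{a_i}$, with $e^{-\infty}=0$. The noncentral Stirling numbers of the second kind are $S(n,k,\phi) = \sum_{r=0}^{n-k}\binom{n}{k+r}\phi^{n-k-r}S(k+r,k)$, and the spillage mass function is $\mathrm{Spillage}(r\mid n,k,\phi) = \binom{n}{k+r}\phi^{n-k-r}S(k+r,k)/S(n,k,\phi)$ for $r=0,\dots,n-k$. *)

theory Defs
  imports "HOL-Combinatorics.Stirling" "HOL-Library.Extended_Real"
begin

definition elog :: "real \<Rightarrow> ereal" where
  "elog x = (if x > 0 then ereal (ln x) else -\<infinity>)"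

text \<open>Exponential on extended reals with exp(-infinity) = 0
  (the value at +infinity is irrelevant here).\<close>
definition eexp :: "ereal \<Rightarrow> real" where
  "eexp a = (case a of ereal x \<Rightarrow> exp x | _ \<Rightarrow> 0)"

definition logsumexp :: "ereal list \<Rightarrow> ereal" where
  "logsumexp as = elog (sum_list (map eexp as))"

definition ncStirling :: "nat \<Rightarrow> nat \<Rightarrow> real \<Rightarrow> real" where
  "ncStirling n k \<phi> =
     (\<Sum>r=0..n-k. real (n choose (k+r)) * \<phi> ^ (n-k-r) * real (Stirling (k+r) k))"

definition Spillage :: "nat \<Rightarrow> nat \<Rightarrow> nat \<Rightarrow> real \<Rightarrow> real" where
  "Spillage r n k \<phi> =
     real (n choose (k+r)) * \<phi> ^ (n-k-r) * real (Stirling (k+r) k) / ncStirling n k \<phi>"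

definition Lfun :: "nat \<Rightarrow> real \<Rightarrow> nat \<Rightarrow> nat \<Rightarrow> ereal" where
  "Lfun n \<phi> r k = elog (real (n choose (k+r))) + ereal (real (n-k-r) * ln \<phi>)
                   + elog (real (Stirling (k+r) k))"

end

theory Submission
  imports Defs
begin

text \<open>\<open>L(r,k)\<close> is the logarithm of the \<open>r\<close>-th summand \<open>T(r,k)\<close> of \<open>S(n,k,\<phi>)\<close>.
  With \<open>j = k + r - 1\<close>, the Stirling recurrence \<open>S(j+1,k) = k S(j,k) + S(j,k-1)\<close> and the
  absorption identity \<open>(j+1) C(n,j+1) = (n-j) C(n,j)\<close> give
  \<open>(k+r) \<phi> T(r,k) = (n-k-r+1) (k T(r-1,k) + T(r,k-1))\<close>. Taking logarithms turns the
  products into sums and the sum into a logsumexp; the spillage probabilities are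
  \<open>T(r,k)\<close> normalised by \<open>S(n,k,\<phi>) = \<Sum>\<^sub>r T(r,k)\<close>, whose logarithm is again a logsumexp.\<close>

lemma elog_pos: "x > 0 \<Longrightarrow> elog x = ereal (ln x)"
  by (simp add: elog_def)

lemma elog_mult: "x \<ge> 0 \<Longrightarrow> y \<ge> 0 \<Longrightarrow> elog (x * y) = elog x + elog y"
  by (cases "x = 0"; cases "y = 0") (auto simp: elog_def ln_mult)

lemma elog_divide: "x \<ge> 0 \<Longrightarrow> y > 0 \<Longrightarrow> elog (x / y) = elog x - elog y"
  by (cases "x = 0") (auto simp: elog_def ln_div minus_ereal_def)

lemma elog_power: "x > 0 \<Longrightarrow> elog (x ^ m) = ereal (real m * ln x)"
  by (simp add: elog_def ln_realpow)

lemma eexp_elog: "x \<ge> 0 \<Longrightarrow> eexp (elog x) = x"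
  by (cases "x = 0") (auto simp: elog_def eexp_def)

lemma logsumexp_map_elog:
  "(\<And>x. x \<in> set xs \<Longrightarrow> x \<ge> 0) \<Longrightarrow> logsumexp (map elog xs) = elog (sum_list xs)"
  unfolding logsumexp_def by (simp add: o_def eexp_elog cong: map_cong)

lemma Suc_times_binomial_Suc_eq: "Suc j * (n choose Suc j) = (n - j) * (n choose j)"
  using times_binomial_minus1_eq[of "Suc j" n] binomial_absorb_comp[of n j] by simp

definition spill_term :: "nat \<Rightarrow> real \<Rightarrow> nat \<Rightarrow> nat \<Rightarrow> real" where
  "spill_term n \<phi> r k = real (n choose (k+r)) * \<phi> ^ (n-k-r) * real (Stirling (k+r) k)"

lemma spill_term_nonneg: "\<phi> > 0 \<Longrightarrow> spill_term n \<phi> r k \<ge> 0"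
  by (simp add: spill_term_def)

lemma Lfun_eq_elog_spill_term: "\<phi> > 0 \<Longrightarrow> Lfun n \<phi> r k = elog (spill_term n \<phi> r k)"
  unfolding Lfun_def spill_term_def by (simp add: elog_mult elog_power)

lemma spill_term_recurrence:
  assumes "1 \<le> r" "1 \<le> k" "k + r \<le> n"
  shows "real (k+r) * \<phi> * spill_term n \<phi> r k
    = real (n-k-r+1) * (real k * spill_term n \<phi> (r-1) k + spill_term n \<phi> r (k-1))"
proof -
  define j where "j = k + r - 1"
  have idx: "k + r = Suc j" "k + (r-1) = j" "(k-1) + r = j" "n-k-r+1 = n - j"
    "n - k - (r-1) = n - j" "n - (k-1) - r = n - j"
    using assms by (auto simp: j_def)
  have power: "\<phi> * \<phi> ^ (n - Suc j) = \<phi> ^ (n - j)"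
    using assms by (simp add: idx(1) flip: power_Suc Suc_diff_le)
  have stirling: "real (Stirling (Suc j) k) = real k * real (Stirling j k) + real (Stirling j (k-1))"
    using assms by (cases k) (simp_all add: algebra_simps)
  have binomial: "real (Suc j) * real (n choose Suc j) = real (n - j) * real (n choose j)"
    using Suc_times_binomial_Suc_eq[of j n] by (metis of_nat_mult)
  have "real (k+r) * \<phi> * spill_term n \<phi> r k
      = real (Suc j) * real (n choose Suc j) * (\<phi> * \<phi> ^ (n - Suc j)) * real (Stirling (Suc j) k)"
    unfolding spill_term_def idx by (simp add: algebra_simps idx(1)[symmetric])
  also have "\<dots> = real (n - j) * (real (n choose j) * \<phi> ^ (n - j) * real (Stirling (Suc j) k))"
    unfolding binomial power by (simp add: algebra_simps)
  also have "\<dots> = real (n-k-r+1) * (real k * spill_term n \<phi> (r-1) k + spill_term n \<phi> r (k-1))"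
    unfolding spill_term_def idx stirling by (simp add: algebra_simps)
  finally show ?thesis .
qed

lemma Lfun_recurrence:
  assumes "0 < \<phi>" "1 \<le> r" "1 \<le> k" "k + r \<le> n"
  shows "Lfun n \<phi> r k = ereal (ln (real (n-k-r+1)) - ln (real (k+r)) - ln \<phi>)
    + logsumexp [ereal (ln (real k)) + Lfun n \<phi> (r-1) k, Lfun n \<phi> r (k-1)]"
proof -
  let ?c = "real (n-k-r+1) / (real (k+r) * \<phi>)"
  let ?s = "real k * spill_term n \<phi> (r-1) k + spill_term n \<phi> r (k-1)"
  have c: "ereal (ln (real (n-k-r+1)) - ln (real (k+r)) - ln \<phi>) = elog ?c"
    using assms by (simp add: elog_pos ln_div ln_mult)
  have "logsumexp [ereal (ln (real k)) + Lfun n \<phi> (r-1) k, Lfun n \<phi> r (k-1)]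
      = logsumexp (map elog [real k * spill_term n \<phi> (r-1) k, spill_term n \<phi> r (k-1)])"
    using assms by (simp add: Lfun_eq_elog_spill_term elog_mult elog_pos spill_term_nonneg)
  also have "\<dots> = elog ?s"
    using assms by (subst logsumexp_map_elog) (auto simp: spill_term_nonneg)
  finally have "ereal (ln (real (n-k-r+1)) - ln (real (k+r)) - ln \<phi>)
      + logsumexp [ereal (ln (real k)) + Lfun n \<phi> (r-1) k, Lfun n \<phi> r (k-1)] = elog ?c + elog ?s"
    unfolding c by simp
  also have "\<dots> = elog (?c * ?s)"
    using assms by (simp add: elog_mult spill_term_nonneg del: times_divide_eq_left)
  also have "?c * ?s = spill_term n \<phi> r k"
    using spill_term_recurrence[OF assms(2-4), of \<phi>] assms
    by (simp add: divide_simps del: of_nat_add of_nat_diff) (simp add: ac_simps)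
  finally show ?thesis
    using assms(1) by (simp add: Lfun_eq_elog_spill_term)
qed

lemma ncStirling_eq_sum_list_spill_term:
  "ncStirling n k \<phi> = sum_list (map (\<lambda>j. spill_term n \<phi> j k) [0..<n-k+1])"
  unfolding ncStirling_def spill_term_def
  by (simp only: interv_sum_list_conv_sum_set_nat set_upt Suc_eq_plus1[symmetric]
      atLeastLessThanSuc_atLeastAtMost)

lemma ncStirling_pos:
  assumes "0 < \<phi>" "k \<le> n"
  shows "ncStirling n k \<phi> > 0"
proof -
  have "0 < spill_term n \<phi> 0 k"
    using assms by (simp add: spill_term_def)
  also have "\<dots> \<le> ncStirling n k \<phi>"
    unfolding ncStirling_def spill_term_def[symmetric]
    by (rule member_le_sum) (use assms(1) spill_term_nonneg in auto)
  finally show ?thesis .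
qed

lemma elog_Spillage:
  assumes "0 < \<phi>" "k \<le> n"
  shows "elog (Spillage r n k \<phi>)
    = Lfun n \<phi> r k - logsumexp (map (\<lambda>j. Lfun n \<phi> j k) [0..<n-k+1])"
proof -
  have "logsumexp (map (\<lambda>j. Lfun n \<phi> j k) [0..<n-k+1]) = elog (ncStirling n k \<phi>)"
    using assms(1) unfolding ncStirling_eq_sum_list_spill_term
    by (subst logsumexp_map_elog[symmetric])
      (auto simp: spill_term_nonneg Lfun_eq_elog_spill_term o_def)
  moreover have "Spillage r n k \<phi> = spill_term n \<phi> r k / ncStirling n k \<phi>"
    by (simp add: Spillage_def spill_term_def)
  ultimately show ?thesis
    using assms by (simp add: elog_divide spill_term_nonneg ncStirling_pos Lfun_eq_elog_spill_term)
qed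

theorem theorem5:
  fixes n :: nat and \<phi> :: real
  assumes "n \<ge> 1" and "0 < \<phi>"
  shows "Lfun n \<phi> 0 0 = ereal (real n * ln \<phi>) \<and>
    (\<forall>r. 1 \<le> r \<and> r \<le> n \<longrightarrow> Lfun n \<phi> r 0 = -\<infinity>) \<and>
    (\<forall>k. k \<le> n \<longrightarrow>
           Lfun n \<phi> 0 k = ereal (ln (real (n choose k)) + real (n-k) * ln \<phi>)) \<and>
    (\<forall>r k. 1 \<le> r \<and> 1 \<le> k \<and> k + r \<le> n \<longrightarrow>
           Lfun n \<phi> r k = ereal (ln (real (n-k-r+1)) - ln (real (k+r)) - ln \<phi>)
             + logsumexp [ereal (ln (real k)) + Lfun n \<phi> (r-1) k, Lfun n \<phi> r (k-1)]) \<and>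
    (\<forall>k r. k \<le> n \<and> r \<le> n - k \<longrightarrow>
           elog (Spillage r n k \<phi>) =
             Lfun n \<phi> r k - logsumexp (map (\<lambda>j. Lfun n \<phi> j k) [0..<n-k+1]))"
proof (intro conjI allI impI)
  show "Lfun n \<phi> 0 0 = ereal (real n * ln \<phi>)"
    by (simp add: Lfun_def elog_def)
next
  fix r assume "1 \<le> r \<and> r \<le> n"
  then show "Lfun n \<phi> r 0 = -\<infinity>"
    by (cases r) (simp_all add: Lfun_def elog_def)
next
  fix k assume "k \<le> n"
  then show "Lfun n \<phi> 0 k = ereal (ln (real (n choose k)) + real (n-k) * ln \<phi>)"
    by (simp add: Lfun_def elog_def)
next
  fix r k assume "1 \<le> r \<and> 1 \<le> k \<and> k + r \<le> n"
  with assms(2) show "Lfun n \<phi> r k = ereal (ln (real (n-k-r+1)) - ln (real (k+r)) - ln \<phi>)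
      + logsumexp [ereal (ln (real k)) + Lfun n \<phi> (r-1) k, Lfun n \<phi> r (k-1)]"
    by (simp add: Lfun_recurrence)
next
  fix k r assume "k \<le> n \<and> r \<le> n - k"
  with assms(2) show "elog (Spillage r n k \<phi>)
      = Lfun n \<phi> r k - logsumexp (map (\<lambda>j. Lfun n \<phi> j k) [0..<n-k+1])"
    by (simp add: elog_Spillage)
qed

end
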